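(* Let $k\geq 3$. For every $c>0$ there exists $q_c\in(0,1)$ such that, with probability $1-o(1)$ as $n\to\infty$, a random instance $\Phi$ of 1-in-$k$ SAT on $n$ variables with clause/variable ratio $c$ has no two satisfying assignments $A,B$ with $\mathrm{overlap}(A,B)<q_c$.
   Context: An instance of 1-in-$k$ SAT on variables $x_1,\dots,x_n$ is a conjunction of clauses, each consisting of exactly $k$ literals on $k$ distinct variables; an assignment satisfies it if in every clause exactly one literal is true. The random instance with clause/variable ratio $c$ is taken in the constant probability model: each of the $2^k\binom{n}{k}$ possible clauses is included independently with probability $2^{-k}p$, where $p\binom nk=cn$. The overlap of two assignments $A,B$ is $\mathrm{overlap}(A,B)=|\{i:A(x_i)=B(x_i)\}|/n$. *)

theory Defs
  imports Complex_Main "HOL-Library.FuncSet"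
begin

(* Variables are x_0,...,x_{n-1} (indices < n). A literal is a pair (i, b):
   it is the positive literal x_i if b = True and the negated literal if b = False. *)
type_synonym literal = "nat \<times> bool"

definition clauses :: "nat \<Rightarrow> nat \<Rightarrow> literal set set" where
  "clauses n k = {L. finite L \<and> card L = k \<and> inj_on fst L \<and> fst ` L \<subseteq> {..<n}}"

definition assignments :: "nat \<Rightarrow> (nat \<Rightarrow> bool) set" where
  "assignments n = {..<n} \<rightarrow>\<^sub>E (UNIV :: bool set)"

definition lit_true :: "(nat \<Rightarrow> bool) \<Rightarrow> literal \<Rightarrow> bool" where
  "lit_true A l \<longleftrightarrow> A (fst l) = snd l"

definition sat_1ink :: "literal set set \<Rightarrow> (nat \<Rightarrow> bool) \<Rightarrow> bool" where
  "sat_1ink \<Phi> A \<longleftrightarrow> (\<forall>L\<in>\<Phi>. card {l\<in>L. lit_true A l} = 1)"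

definition overlap :: "nat \<Rightarrow> (nat \<Rightarrow> bool) \<Rightarrow> (nat \<Rightarrow> bool) \<Rightarrow> real" where
  "overlap n A B = real (card {i\<in>{..<n}. A i = B i}) / real n"

(* p with p * (n choose k) = c * n; each clause included with probability 2^{-k} p *)
definition clause_prob :: "nat \<Rightarrow> nat \<Rightarrow> real \<Rightarrow> real" where
  "clause_prob n k c = (c * real n / real (n choose k)) / 2 ^ k"

definition inst_prob :: "nat \<Rightarrow> nat \<Rightarrow> real \<Rightarrow> literal set set \<Rightarrow> real" where
  "inst_prob n k c \<Phi> = clause_prob n k c ^ card \<Phi> *
      (1 - clause_prob n k c) ^ (card (clauses n k) - card \<Phi>)"

definition rprob :: "nat \<Rightarrow> nat \<Rightarrow> real \<Rightarrow> (literal set set \<Rightarrow> bool) \<Rightarrow> real" where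
  "rprob n k c P = (\<Sum>\<Phi>\<in>{\<Phi>. \<Phi> \<subseteq> clauses n k \<and> P \<Phi>}. inst_prob n k c \<Phi>)"

end

theory Submission
  imports Defs
begin

(*
  If A and B both satisfy \<Phi> and agree only on a set T of variables, then
  \<Phi> contains no all-positive clause on k variables outside T: on such variables B is
  the negation of A, so B makes k - 1 \<noteq> 1 literals of that clause true.  Hence the
  event "two solutions of overlap < q" is contained in the union, over the sets T of
  fewer than q n variables, of the events "\<Phi> avoids every positive clause outside T".
  Each such event has probability (1 - p)^C(n - |T|, k) \<le> exp(-c n / 2^(k+1)), because
  C(n - |T|, k) \<ge> C(n, k) / 2 when k |T| \<le> n/2; and there are at most
  (1 + x)^n / x^(q n) small sets T.  For q small enough in terms of x and x small in
  terms of c, the union bound is exponentially small.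
*)


section \<open>The binomial random subset\<close>

lemma sum_Pow_binomial:
  fixes a b :: real
  assumes "finite V"
  shows "(\<Sum>X\<in>Pow V. a ^ card X * b ^ card (V - X)) = (a + b) ^ card V"
  using prod_add[OF assms, of "\<lambda>_. a" "\<lambda>_. b"] by simp

definition bprob :: "'a set \<Rightarrow> real \<Rightarrow> ('a set \<Rightarrow> bool) \<Rightarrow> real" where
  "bprob U p P = (\<Sum>\<Phi>\<in>{\<Phi>. \<Phi> \<subseteq> U \<and> P \<Phi>}. p ^ card \<Phi> * (1 - p) ^ (card U - card \<Phi>))"

lemma clauses_finite: "finite (clauses n k)"
proof -
  have "clauses n k \<subseteq> Pow ({..<n} \<times> UNIV)" unfolding clauses_def by auto
  then show ?thesis by (rule finite_subset) simp
qed

lemma rprob_eq_bprob: "rprob n k c P = bprob (clauses n k) (clause_prob n k c) P"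
  unfolding rprob_def bprob_def inst_prob_def by simp

lemma bprob_avoid:
  assumes "finite U" "S \<subseteq> U"
  shows "bprob U p (\<lambda>\<Phi>. \<Phi> \<inter> S = {}) = (1 - p) ^ card S"
proof -
  have "p ^ card \<Phi> * (1 - p) ^ (card U - card \<Phi>)
      = (1 - p) ^ card S * (p ^ card \<Phi> * (1 - p) ^ card (U - S - \<Phi>))"
    if \<Phi>: "\<Phi> \<in> Pow (U - S)" for \<Phi>
  proof -
    have "card U - card \<Phi> = card (U - \<Phi>)"
      using \<Phi> assms by (subst card_Diff_subset) (auto intro: finite_subset)
    also have "U - \<Phi> = (U - S - \<Phi>) \<union> S" using \<Phi> assms by auto
    also have "card \<dots> = card (U - S - \<Phi>) + card S"
      using assms by (subst card_Un_disjoint) (auto intro: finite_subset)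
    finally show ?thesis by (simp add: power_add)
  qed
  moreover have "{\<Phi>. \<Phi> \<subseteq> U \<and> \<Phi> \<inter> S = {}} = Pow (U - S)" by auto
  ultimately have "bprob U p (\<lambda>\<Phi>. \<Phi> \<inter> S = {})
      = (\<Sum>\<Phi>\<in>Pow (U - S). (1 - p) ^ card S * (p ^ card \<Phi> * (1 - p) ^ card (U - S - \<Phi>)))"
    unfolding bprob_def by (intro sum.cong) auto
  also have "\<dots> = (1 - p) ^ card S"
    using assms sum_Pow_binomial[of "U - S" p "1 - p"] by (simp flip: sum_distrib_left)
  finally show ?thesis .
qed

lemma bprob_certain: "finite U \<Longrightarrow> bprob U p (\<lambda>_. True) = 1"
  using bprob_avoid[of U "{}" p] by simp

lemma bprob_compl:
  assumes "finite U"
  shows "bprob U p (\<lambda>\<Phi>. \<not> P \<Phi>) = 1 - bprob U p P"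
proof -
  let ?w = "\<lambda>\<Phi>. p ^ card \<Phi> * (1 - p) ^ (card U - card \<Phi>)"
  have split: "{\<Phi>. \<Phi> \<subseteq> U \<and> True} = {\<Phi>. \<Phi> \<subseteq> U \<and> P \<Phi>} \<union> {\<Phi>. \<Phi> \<subseteq> U \<and> \<not> P \<Phi>}" by auto
  have "finite {\<Phi>. \<Phi> \<subseteq> U}" using assms by simp
  then have "sum ?w {\<Phi>. \<Phi> \<subseteq> U \<and> True}
      = sum ?w {\<Phi>. \<Phi> \<subseteq> U \<and> P \<Phi>} + sum ?w {\<Phi>. \<Phi> \<subseteq> U \<and> \<not> P \<Phi>}"
    unfolding split by (intro sum.union_disjoint) auto
  then show ?thesis using bprob_certain[OF assms, of p] unfolding bprob_def by simp
qed

lemma bprob_nonneg: "0 \<le> p \<Longrightarrow> p \<le> 1 \<Longrightarrow> 0 \<le> bprob U p P"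
  unfolding bprob_def by (intro sum_nonneg) simp

lemma bprob_mono:
  assumes "finite U" "0 \<le> p" "p \<le> 1" "\<And>\<Phi>. \<Phi> \<subseteq> U \<Longrightarrow> P \<Phi> \<Longrightarrow> Q \<Phi>"
  shows "bprob U p P \<le> bprob U p Q"
  unfolding bprob_def using assms
  by (intro sum_mono2) (auto intro: finite_subset[of _ "Pow U"])

lemma bprob_union:
  assumes "finite U" "0 \<le> p" "p \<le> 1" "finite I"
  shows "bprob U p (\<lambda>\<Phi>. \<exists>T\<in>I. Q T \<Phi>) \<le> (\<Sum>T\<in>I. bprob U p (Q T))"
  using assms(4)
proof (induction I rule: finite_induct)
  case empty
  then show ?case unfolding bprob_def by simp
next
  case (insert T0 I)
  let ?w = "\<lambda>\<Phi>. p ^ card \<Phi> * (1 - p) ^ (card U - card \<Phi>)"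
  have fin: "finite {\<Phi>. \<Phi> \<subseteq> U}" using assms by simp
  have "bprob U p (\<lambda>\<Phi>. \<exists>T\<in>insert T0 I. Q T \<Phi>)
      = sum ?w ({\<Phi>. \<Phi> \<subseteq> U \<and> Q T0 \<Phi>} \<union> {\<Phi>. \<Phi> \<subseteq> U \<and> (\<exists>T\<in>I. Q T \<Phi>)})"
    unfolding bprob_def by (rule sum.cong) auto
  also have "\<dots> \<le> sum ?w {\<Phi>. \<Phi> \<subseteq> U \<and> Q T0 \<Phi>} + sum ?w {\<Phi>. \<Phi> \<subseteq> U \<and> (\<exists>T\<in>I. Q T \<Phi>)}"
    using assms by (subst sum_Un) (auto intro!: sum_nonneg intro: finite_subset[OF _ fin])
  also have "\<dots> \<le> bprob U p (Q T0) + (\<Sum>T\<in>I. bprob U p (Q T))"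
    using insert.IH unfolding bprob_def by simp
  finally show ?case using insert.hyps by simp
qed


section \<open>Positive clauses outside a set of variables\<close>

definition pos_clauses :: "nat \<Rightarrow> nat \<Rightarrow> nat set \<Rightarrow> literal set set" where
  "pos_clauses n k T = (\<lambda>K. K \<times> {True}) ` {K. K \<subseteq> {..<n} - T \<and> card K = k}"

lemma pos_clauses_subset: "pos_clauses n k T \<subseteq> clauses n k"
  unfolding pos_clauses_def clauses_def
  by (auto simp: card_cartesian_product inj_on_def intro: finite_subset)

lemma card_pos_clauses: "card (pos_clauses n k T) = card ({..<n} - T) choose k"
proof -
  have "inj_on (\<lambda>K. K \<times> {True}) {K. K \<subseteq> {..<n} - T \<and> card K = k}"
    unfolding inj_on_def by (metis fst_image_times insert_not_empty)
  then have "card (pos_clauses n k T) = card {K. K \<subseteq> {..<n} - T \<and> card K = k}"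
    unfolding pos_clauses_def by (rule card_image)
  also have "\<dots> = card ({..<n} - T) choose k" by (rule n_subsets) simp
  finally show ?thesis .
qed

text \<open>The key fact: two solutions forbid every positive clause on variables where
  they disagree, since one of them makes exactly one and the other k - 1 literals true.\<close>
lemma two_solutions_avoid_pos_clauses:
  assumes "k \<ge> 3" "sat_1ink \<Phi> A" "sat_1ink \<Phi> B"
  shows "\<Phi> \<inter> pos_clauses n k {i\<in>{..<n}. A i = B i} = {}"
proof (rule ccontr)
  assume "\<Phi> \<inter> pos_clauses n k {i\<in>{..<n}. A i = B i} \<noteq> {}"
  then obtain K where K: "K \<subseteq> {..<n} - {i\<in>{..<n}. A i = B i}" "card K = k" "K \<times> {True} \<in> \<Phi>"
    unfolding pos_clauses_def by auto
  have true_vars: "card {i\<in>K. C i} = 1" if "sat_1ink \<Phi> C" for C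
  proof -
    have "{l \<in> K \<times> {True}. lit_true C l} = (\<lambda>i. (i, True)) ` {i\<in>K. C i}"
      unfolding lit_true_def by auto
    moreover have "inj_on (\<lambda>i. (i, True)) {i\<in>K. C i}" by (auto intro: inj_onI)
    ultimately show ?thesis
      using that K(3) card_image unfolding sat_1ink_def by fastforce
  qed
  have "{i\<in>K. B i} = K - {i\<in>K. A i}" using K(1) by auto
  moreover have "finite K" using K(1) finite_subset by blast
  ultimately have "card {i\<in>K. B i} = k - 1"
    using true_vars[OF assms(2)] K(2) by (simp add: card_Diff_subset)
  then show False using true_vars[OF assms(3)] assms(1) by simp
qed


section \<open>Binomial and counting estimates\<close>

lemma binomial_diff_lower:
  assumes "s \<le> n"
  shows "real (n choose k) - real s * real ((n - 1) choose (k - 1)) \<le> real ((n - s) choose k)"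
  using assms
proof (induction s)
  case 0
  then show ?case by simp
next
  case (Suc s)
  define m where "m = n - Suc s"
  have nm: "n - s = Suc m" using Suc.prems m_def by simp
  have pascal: "real (Suc m choose k) \<le> real (m choose k) + real ((n - 1) choose (k - 1))"
  proof (cases k)
    case (Suc j)
    have "m choose j \<le> (n - 1) choose j" using Suc.prems m_def by (intro binomial_right_mono) simp
    then show ?thesis using Suc by simp
  qed simp
  have "real (n choose k) - real (Suc s) * real ((n - 1) choose (k - 1))
      = (real (n choose k) - real s * real ((n - 1) choose (k - 1))) - real ((n - 1) choose (k - 1))"
    by (simp add: algebra_simps)
  also have "\<dots> \<le> real (Suc m choose k) - real ((n - 1) choose (k - 1))"
    using Suc nm by simp
  also have "\<dots> \<le> real (m choose k)" using pascal by simp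
  finally show ?case unfolding m_def .
qed

lemma binomial_diff_half:
  assumes "k \<ge> 1" "real k * real s \<le> real n / 2"
  shows "real (n choose k) / 2 \<le> real ((n - s) choose k)"
proof -
  define Bk B1 where "Bk = real (n choose k)" and "B1 = real ((n - 1) choose (k - 1))"
  have "real s \<le> real k * real s" using assms(1) mult_right_mono[of 1 "real k" "real s"] by simp
  with assms(2) have sn: "s \<le> n" by linarith
  have "k * (n choose k) = n * ((n - 1) choose (k - 1))"
    using assms(1) by (intro times_binomial_minus1_eq) simp
  then have absorb: "real n * B1 = real k * Bk"
    unfolding Bk_def B1_def by (metis of_nat_mult)
  have "real s * B1 \<le> Bk / 2"
  proof (cases "n = 0")
    case False
    have "real s * B1 * real n = (real k * real s) * Bk" using absorb by (simp add: algebra_simps)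
    also have "\<dots> \<le> (real n / 2) * Bk" by (rule mult_right_mono[OF assms(2)]) (simp add: Bk_def)
    finally have "real s * B1 * real n \<le> Bk / 2 * real n" by (simp add: mult.commute)
    then show ?thesis using False by (simp add: mult_le_cancel_right)
  qed (use sn in \<open>simp add: Bk_def\<close>)
  then show ?thesis using binomial_diff_lower[OF sn, of k] unfolding Bk_def B1_def by simp
qed

text \<open>The sets of fewer than q n variables, i.e. the possible agreement sets of two
  assignments with overlap below q.\<close>
definition small_sets :: "nat \<Rightarrow> real \<Rightarrow> nat set set" where
  "small_sets n q = {T. T \<subseteq> {..<n} \<and> real (card T) < q * n}"

lemma finite_small_sets: "finite (small_sets n q)"
  unfolding small_sets_def by (rule finite_subset[of _ "Pow {..<n}"]) auto

text \<open>Chernoff-type count of the small sets, obtained by weighting a set T with x^(|T| - q n).\<close>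
lemma card_small_sets:
  fixes x q :: real
  assumes "0 < x" "x \<le> 1"
  shows "real (card (small_sets n q)) \<le> (1 + x) ^ n / x powr (q * n)"
proof -
  have "real (card (small_sets n q)) = (\<Sum>T\<in>small_sets n q. 1)" by simp
  also have "\<dots> \<le> (\<Sum>T\<in>small_sets n q. x ^ card T / x powr (q * n))"
  proof (rule sum_mono)
    fix T assume "T \<in> small_sets n q"
    then have "x powr (q * n) \<le> x powr (real (card T))"
      using assms unfolding small_sets_def by (intro powr_mono') auto
    also have "\<dots> = x ^ card T" using assms by (simp add: powr_realpow)
    finally show "1 \<le> x ^ card T / x powr (q * n)" using assms by simp
  qed
  also have "\<dots> \<le> (\<Sum>T\<in>Pow {..<n}. x ^ card T / x powr (q * n))"
    using assms by (intro sum_mono2) (auto simp: small_sets_def)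
  also have "\<dots> = (\<Sum>T\<in>Pow {..<n}. x ^ card T * 1 ^ card ({..<n} - T)) / x powr (q * n)"
    by (simp add: sum_divide_distrib)
  also have "\<dots> = (1 + x) ^ n / x powr (q * n)"
    using sum_Pow_binomial[of "{..<n}" x 1] by (simp add: add.commute)
  finally show ?thesis .
qed

lemma card_small_sets_exp:
  fixes x q :: real
  assumes "0 < x" "x \<le> 1" "q * ln (1 / x) \<le> x / 2"
  shows "real (card (small_sets n q)) * exp (- (2 * x * n)) \<le> exp (- x / 2) ^ n"
proof -
  have "(1 + x) ^ n \<le> exp (x * n)"
    using assms by (subst mult.commute, subst exp_of_nat_mult)
      (intro power_mono, auto simp: add.commute)
  moreover have "1 / x powr (q * n) \<le> exp (x / 2 * n)"
  proof -
    have "1 / x powr (q * n) = exp (q * ln (1 / x) * n)"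
      using assms by (simp add: powr_def ln_div exp_minus inverse_eq_divide mult_ac)
    also have "q * ln (1 / x) * n \<le> x / 2 * n"
      using assms(3) by (intro mult_right_mono) auto
    finally show ?thesis by simp
  qed
  ultimately have "(1 + x) ^ n * (1 / x powr (q * n)) \<le> exp (x * n) * exp (x / 2 * n)"
    using assms(1) by (intro mult_mono) auto
  then have "(1 + x) ^ n / x powr (q * n) \<le> exp (x * n) * exp (x / 2 * n)" by simp
  then have "real (card (small_sets n q)) * exp (- (2 * x * n))
      \<le> exp (x * n) * exp (x / 2 * n) * exp (- (2 * x * n))"
    using card_small_sets[OF assms(1,2), of n q] by (intro mult_right_mono) auto
  also have "\<dots> = exp (real n * (- x / 2))" by (simp add: exp_add[symmetric] algebra_simps)
  also have "\<dots> = exp (- x / 2) ^ n" by (rule exp_of_nat_mult)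
  finally show ?thesis .
qed


section \<open>Solutions at small overlap are exponentially unlikely\<close>

definition distant_solutions :: "nat \<Rightarrow> real \<Rightarrow> literal set set \<Rightarrow> bool" where
  "distant_solutions n q \<Phi> \<longleftrightarrow> (\<exists>A\<in>assignments n. \<exists>B\<in>assignments n.
      sat_1ink \<Phi> A \<and> sat_1ink \<Phi> B \<and> overlap n A B < q)"

lemma clause_prob_le_1:
  assumes "k \<ge> 2" "k \<le> n" "c > 0" "real n \<ge> c * real k ^ 2"
  shows "clause_prob n k c \<le> 1"
proof -
  have "c * real n * real k ^ 2 \<le> real n * real n"
    using mult_left_mono[OF assms(4), of "real n"] by (simp add: algebra_simps)
  then have "c * real n \<le> (real n / real k) ^ 2"
    using assms by (simp add: field_simps power2_eq_square)
  also have "\<dots> \<le> (real n / real k) ^ k"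
    using assms by (intro power_increasing) (auto simp: field_simps)
  also have "\<dots> \<le> real (n choose k)" by (rule binomial_ge_n_over_k_pow_k[OF assms(2)])
  also have "\<dots> \<le> real (n choose k) * 2 ^ k" by (simp add: mult_le_cancel_left1)
  finally show ?thesis
    using assms unfolding clause_prob_def by (simp add: divide_le_eq mult.commute)
qed

text \<open>Avoiding all positive clauses outside a set T with k |T| \<le> n/2 costs
  exp(-c n / 2^(k+1)): there are at least C(n, k) / 2 such clauses.\<close>
lemma avoid_pos_clauses_prob:
  assumes "k \<ge> 1" "k \<le> n" "0 \<le> clause_prob n k c" "clause_prob n k c \<le> 1"
    and "T \<subseteq> {..<n}" "real k * real (card T) \<le> real n / 2"
  shows "rprob n k c (\<lambda>\<Phi>. \<Phi> \<inter> pos_clauses n k T = {}) \<le> exp (- (c / 2 ^ (k + 1) * n))"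
proof -
  define p where "p = clause_prob n k c"
  define s where "s = card T"
  have p01: "0 \<le> p" "p \<le> 1" using assms(3,4) unfolding p_def by auto
  have cs: "card ({..<n} - T) = n - s"
    using assms(5) unfolding s_def by (subst card_Diff_subset) (auto intro: finite_subset)
  have half: "real (n choose k) / 2 \<le> real ((n - s) choose k)"
    using assms(1,6) unfolding s_def by (rule binomial_diff_half)
  have "rprob n k c (\<lambda>\<Phi>. \<Phi> \<inter> pos_clauses n k T = {}) = (1 - p) ^ ((n - s) choose k)"
    unfolding rprob_eq_bprob p_def
    by (simp add: bprob_avoid[OF clauses_finite pos_clauses_subset] card_pos_clauses cs)
  also have "\<dots> \<le> exp (- p) ^ ((n - s) choose k)"
    using p01 by (intro power_mono) (auto simp: exp_ge_add_one_self[of "-p", simplified])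
  also have "\<dots> = exp (- (p * real ((n - s) choose k)))"
    by (simp add: exp_of_nat_mult[symmetric] mult.commute)
  also have "\<dots> \<le> exp (- (p * (real (n choose k) / 2)))"
    using mult_left_mono[OF half p01(1)] by simp
  also have "p * (real (n choose k) / 2) = c / 2 ^ (k + 1) * n"
    using assms(2) unfolding p_def clause_prob_def by (simp add: field_simps)
  finally show ?thesis .
qed

lemma distant_solutions_union_bound:
  assumes "k \<ge> 3" "c > 0" "0 \<le> q" "real k * q \<le> 1 / 2"
    and "k \<le> n" "real n \<ge> c * real k ^ 2"
  shows "rprob n k c (distant_solutions n q)
      \<le> real (card (small_sets n q)) * exp (- (c / 2 ^ (k + 1) * n))"
proof -
  define p where "p = clause_prob n k c"
  have n0: "n > 0" using assms by simp
  have p01: "0 \<le> p" "p \<le> 1"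
    using assms clause_prob_le_1[of k n c] unfolding p_def clause_prob_def by auto
  let ?U = "clauses n k"
  have "rprob n k c (distant_solutions n q) = bprob ?U p (distant_solutions n q)"
    unfolding p_def by (rule rprob_eq_bprob)
  also have "\<dots> \<le> bprob ?U p (\<lambda>\<Phi>. \<exists>T\<in>small_sets n q. \<Phi> \<inter> pos_clauses n k T = {})"
  proof (rule bprob_mono[OF clauses_finite p01])
    fix \<Phi> assume "distant_solutions n q \<Phi>"
    then obtain A B where AB: "sat_1ink \<Phi> A" "sat_1ink \<Phi> B" "overlap n A B < q"
      unfolding distant_solutions_def by blast
    then have "{i\<in>{..<n}. A i = B i} \<in> small_sets n q"
      using n0 unfolding overlap_def small_sets_def by (auto simp: field_simps)
    with two_solutions_avoid_pos_clauses[OF assms(1) AB(1,2)]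
    show "\<exists>T\<in>small_sets n q. \<Phi> \<inter> pos_clauses n k T = {}" by blast
  qed
  also have "\<dots> \<le> (\<Sum>T\<in>small_sets n q. bprob ?U p (\<lambda>\<Phi>. \<Phi> \<inter> pos_clauses n k T = {}))"
    by (rule bprob_union[OF clauses_finite p01 finite_small_sets])
  also have "\<dots> \<le> (\<Sum>T\<in>small_sets n q. exp (- (c / 2 ^ (k + 1) * n)))"
  proof (rule sum_mono)
    fix T assume T: "T \<in> small_sets n q"
    have "real k * real (card T) \<le> real k * (q * n)"
      using T unfolding small_sets_def by (intro mult_left_mono) auto
    also have "\<dots> \<le> real n / 2"
      using mult_right_mono[OF assms(4), of "real n"] by (simp add: algebra_simps)
    finally show "bprob ?U p (\<lambda>\<Phi>. \<Phi> \<inter> pos_clauses n k T = {}) \<le> exp (- (c / 2 ^ (k + 1) * n))"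
      using avoid_pos_clauses_prob[of k n c T] T assms p01
      unfolding small_sets_def p_def rprob_eq_bprob by auto
  qed
  finally show ?thesis by simp
qed

lemma distant_solutions_vanish:
  assumes "k \<ge> 3" "c > 0" "0 < x" "x \<le> 1" "x \<le> c / 2 ^ (k + 2)"
    and "0 \<le> q" "real k * q \<le> 1 / 2" "q * ln (1 / x) \<le> x / 2"
  shows "(\<lambda>n. rprob n k c (distant_solutions n q)) \<longlonglongrightarrow> 0"
proof (rule tendsto_sandwich[of "\<lambda>_. 0" _ _ "\<lambda>n. exp (- x / 2) ^ n"])
  define N where "N = nat \<lceil>c * real k ^ 2\<rceil> + k"
  have large: "k \<le> n" "c * real k ^ 2 \<le> real n" if "n \<ge> N" for n
    using that real_nat_ceiling_ge[of "c * real k ^ 2"] unfolding N_def by linarith+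
  have "rprob n k c (distant_solutions n q) \<le> exp (- x / 2) ^ n" if "n \<ge> N" for n
  proof -
    have "2 * x * real n \<le> c / 2 ^ (k + 1) * real n"
      using assms(5) by (intro mult_right_mono) (auto simp: field_simps)
    then have "exp (- (c / 2 ^ (k + 1) * n)) \<le> exp (- (2 * x * n))" by simp
    moreover have "rprob n k c (distant_solutions n q)
        \<le> real (card (small_sets n q)) * exp (- (c / 2 ^ (k + 1) * n))"
      using distant_solutions_union_bound[OF assms(1,2,6,7) large[OF that]] .
    ultimately have "rprob n k c (distant_solutions n q)
        \<le> real (card (small_sets n q)) * exp (- (2 * x * n))"
      by (meson mult_left_mono of_nat_0_le_iff order_trans)
    also have "\<dots> \<le> exp (- x / 2) ^ n" by (rule card_small_sets_exp[OF assms(3,4,8)])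
    finally show ?thesis .
  qed
  then show "\<forall>\<^sub>F n in sequentially. rprob n k c (distant_solutions n q) \<le> exp (- x / 2) ^ n"
    by (rule eventually_sequentiallyI)
  have "0 \<le> rprob n k c (distant_solutions n q)" if "n \<ge> N" for n
    unfolding rprob_eq_bprob using assms clause_prob_le_1[of k n c] large[OF that]
    by (intro bprob_nonneg) (auto simp: clause_prob_def)
  then show "\<forall>\<^sub>F n in sequentially. 0 \<le> rprob n k c (distant_solutions n q)"
    by (rule eventually_sequentiallyI)
  show "(\<lambda>n. exp (- x / 2) ^ n) \<longlonglongrightarrow> 0" using assms(3) by (intro LIMSEQ_power_zero) simp
qed simp


theorem theorem3:
  fixes k :: nat
  assumes "k \<ge> 3"
  shows "\<forall>c::real. c > 0 \<longrightarrow> (\<exists>q. 0 < q \<and> q < 1 \<and>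
    (\<lambda>n. rprob n k c (\<lambda>\<Phi>. \<not> (\<exists>A\<in>assignments n. \<exists>B\<in>assignments n.
        sat_1ink \<Phi> A \<and> sat_1ink \<Phi> B \<and> overlap n A B < q))) \<longlonglongrightarrow> 1)"
  unfolding distant_solutions_def[symmetric]
proof (intro allI impI)
  fix c :: real assume c: "c > 0"
  define x where "x = min (c / 2 ^ (k + 2)) (1 / 2)"
  define q where "q = min (1 / (2 * real k)) (x / (2 * ln (1 / x)))"
  have x: "0 < x" "x \<le> 1 / 2" "x \<le> c / 2 ^ (k + 2)" using c unfolding x_def by auto
  have ln_pos: "ln (1 / x) > 0" using x by simp
  have k: "real k \<ge> 3" using assms by simp
  have "0 < q" using k x ln_pos unfolding q_def by simp
  moreover have "q \<le> 1 / (2 * real k)" "q \<le> x / (2 * ln (1 / x))" unfolding q_def by simp_all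
  ultimately have q: "0 < q" "real k * q \<le> 1 / 2" "q * ln (1 / x) \<le> x / 2"
    using k ln_pos by (simp_all add: field_simps)
  have "q < 1" using q(1,2) k mult_right_mono[of 3 "real k" q] by linarith
  have "(\<lambda>n. 1 - rprob n k c (distant_solutions n q)) \<longlonglongrightarrow> 1 - 0"
    using distant_solutions_vanish[OF assms c x(1) _ x(3) _ q(2,3)] x q(1) by (intro tendsto_intros) auto
  then have "(\<lambda>n. rprob n k c (\<lambda>\<Phi>. \<not> distant_solutions n q \<Phi>)) \<longlonglongrightarrow> 1"
    by (simp add: rprob_eq_bprob bprob_compl[OF clauses_finite])
  then show "\<exists>q. 0 < q \<and> q < 1 \<and> (\<lambda>n. rprob n k c (\<lambda>\<Phi>. \<not> distant_solutions n q \<Phi>)) \<longlonglongrightarrow> 1"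
    using q(1) \<open>q < 1\<close> by blast
qed

end
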